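(* Let $(A,+,\circ)$ be a finite left brace which has a transitive cycle base, let $g$ be an element of a transitive cycle base $X$ of $A$, and let $(A,\bullet)$ be the cycle set given by $a\bullet b:=\lambda_a(g)^{-}\circ b$. Let $H$ be the subgroup of $(A,\circ)$ such that $\mathrm{Ret}(A,\bullet)=A/H$ (namely $H=\{h\in A\mid\lambda_h(g)=g\}$). If $H$ is a normal subgroup of $(A,\circ)$, then $H=\mathrm{Soc}(A)$.
   Context: A left brace is a set $A$ with two operations such that $(A,+)$ is an abelian group, $(A,\circ)$ is a group, and $a\circ(b+c)=a\circ b-a+a\circ c$. $\lambda_a(b):=-a+a\circ b$; $a\mapsto\lambda_a$ is a homomorphism $(A,\circ)\to\mathrm{Aut}(A,+)$. $a^{-}$ is the inverse of $a$ in $(A,\circ)$. $\mathrm{Soc}(A):=\{a\mid\lambda_a=\mathrm{id}_A\}$. A transitive cycle base is a single $\lambda$-orbit generating $(A,+)$. For a cycle set (left multiplications $\sigma_x$ bijective, $(x\cdot y)\cdot(x\cdot z)=(y\cdot x)\cdot(y\cdot z)$), $\mathrm{Ret}(X)$ is the quotient by $x\sim y\iff\sigma_x=\sigma_y$; for $(A,\bullet)$ its classes are the left cosets $a\circ H$. *)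

theory Defs
  imports "HOL-Algebra.Algebra"
begin

definition left_brace :: "'a monoid \<Rightarrow> 'a monoid \<Rightarrow> bool" where
  "left_brace Add Mul \<longleftrightarrow>
     comm_group Add \<and> group Mul \<and> carrier Add = carrier Mul \<and>
     (\<forall>a\<in>carrier Mul. \<forall>b\<in>carrier Mul. \<forall>c\<in>carrier Mul.
        a \<otimes>\<^bsub>Mul\<^esub> (b \<otimes>\<^bsub>Add\<^esub> c)
          = (a \<otimes>\<^bsub>Mul\<^esub> b) \<otimes>\<^bsub>Add\<^esub> inv\<^bsub>Add\<^esub> a \<otimes>\<^bsub>Add\<^esub> (a \<otimes>\<^bsub>Mul\<^esub> c))"

definition brace_lambda :: "'a monoid \<Rightarrow> 'a monoid \<Rightarrow> 'a \<Rightarrow> 'a \<Rightarrow> 'a" where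
  "brace_lambda Add Mul a b = inv\<^bsub>Add\<^esub> a \<otimes>\<^bsub>Add\<^esub> (a \<otimes>\<^bsub>Mul\<^esub> b)"

definition brace_soc :: "'a monoid \<Rightarrow> 'a monoid \<Rightarrow> 'a set" where
  "brace_soc Add Mul = {a \<in> carrier Mul. \<forall>b\<in>carrier Mul. brace_lambda Add Mul a b = b}"

definition lambda_orbit :: "'a monoid \<Rightarrow> 'a monoid \<Rightarrow> 'a \<Rightarrow> 'a set" where
  "lambda_orbit Add Mul x = (\<lambda>a. brace_lambda Add Mul a x) ` carrier Mul"

definition transitive_cycle_base :: "'a monoid \<Rightarrow> 'a monoid \<Rightarrow> 'a set \<Rightarrow> bool" where
  "transitive_cycle_base Add Mul B \<longleftrightarrow>
     (\<exists>x\<in>carrier Mul. B = lambda_orbit Add Mul x) \<and> generate Add B = carrier Add"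

end

theory Submission
  imports Defs
begin

(* The map a \<mapsto> \<lambda>_a is an action of (A,\<circ>) on A by automorphisms of (A,+), and H is the
   stabilizer of g. The stabilizer of \<lambda>_d(g) is the conjugate d H d^-, so normality of H means
   that H fixes the whole orbit of g, which is the cycle base X. Since X generates (A,+) and
   every \<lambda>_h is additive, \<lambda>_h is the identity for h \<in> H; conversely socle elements fix g. *)

lemma fixed_points_subgroup:
  assumes "group_hom G G f"
  shows "subgroup {x \<in> carrier G. f x = x} G"
proof -
  interpret group_hom G G f by (fact assms)
  show ?thesis
    by (auto intro!: subgroupI simp: hom_inv)
qed

locale brace =
  fixes Add Mul :: "'a monoid"
  assumes left_brace: "left_brace Add Mul"
begin

sublocale add: comm_group Add
  using left_brace unfolding left_brace_def by blast

sublocale mul: group Mul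
  using left_brace unfolding left_brace_def by blast

lemma carrier_Add [simp]: "carrier Add = carrier Mul"
  using left_brace unfolding left_brace_def by blast

lemma brace_distrib:
  assumes "a \<in> carrier Mul" "b \<in> carrier Mul" "c \<in> carrier Mul"
  shows "a \<otimes>\<^bsub>Mul\<^esub> (b \<otimes>\<^bsub>Add\<^esub> c)
    = (a \<otimes>\<^bsub>Mul\<^esub> b) \<otimes>\<^bsub>Add\<^esub> inv\<^bsub>Add\<^esub> a \<otimes>\<^bsub>Add\<^esub> (a \<otimes>\<^bsub>Mul\<^esub> c)"
  using left_brace assms unfolding left_brace_def by blast

lemma add_closed [simp]:
  "a \<in> carrier Mul \<Longrightarrow> b \<in> carrier Mul \<Longrightarrow> a \<otimes>\<^bsub>Add\<^esub> b \<in> carrier Mul"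
  using add.m_closed by simp

lemma add_inv_closed [simp]: "a \<in> carrier Mul \<Longrightarrow> inv\<^bsub>Add\<^esub> a \<in> carrier Mul"
  using add.inv_closed by simp

abbreviation lam :: "'a \<Rightarrow> 'a \<Rightarrow> 'a" where
  "lam a \<equiv> brace_lambda Add Mul a"

lemma lambda_closed [simp]:
  "a \<in> carrier Mul \<Longrightarrow> b \<in> carrier Mul \<Longrightarrow> lam a b \<in> carrier Mul"
  by (simp add: brace_lambda_def)

lemma lambda_add:
  assumes "a \<in> carrier Mul" "b \<in> carrier Mul" "c \<in> carrier Mul"
  shows "lam a (b \<otimes>\<^bsub>Add\<^esub> c) = lam a b \<otimes>\<^bsub>Add\<^esub> lam a c"
  using assms by (simp add: brace_lambda_def brace_distrib add.m_assoc)

lemma lambda_hom: "a \<in> carrier Mul \<Longrightarrow> group_hom Add Add (lam a)"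
  by (auto simp: group_hom_def group_hom_axioms_def add.is_group lambda_add intro!: homI)

lemma lambda_mult:
  assumes a: "a \<in> carrier Mul" and b: "b \<in> carrier Mul" and c: "c \<in> carrier Mul"
  shows "lam (a \<otimes>\<^bsub>Mul\<^esub> b) c = lam a (lam b c)"
proof -
  interpret lam_a: group_hom Add Add "lam a" using lambda_hom[OF a] .
  have "lam a (lam b c) = inv\<^bsub>Add\<^esub> (lam a b) \<otimes>\<^bsub>Add\<^esub> lam a (b \<otimes>\<^bsub>Mul\<^esub> c)"
    using a b c by (simp add: brace_lambda_def[of _ _ b c] lambda_add lam_a.hom_inv)
  also have "\<dots> = lam (a \<otimes>\<^bsub>Mul\<^esub> b) c"
    using a b c
    by (simp add: brace_lambda_def add.inv_mult_group add.m_assoc mul.m_assoc)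
      (simp add: add.m_assoc [symmetric])
  finally show ?thesis ..
qed

lemma lambda_orbit_of_orbit_point:
  assumes b: "b \<in> carrier Mul" and x: "x \<in> carrier Mul"
  shows "lambda_orbit Add Mul (lam b x) = lambda_orbit Add Mul x"
proof (intro equalityI subsetI)
  fix y assume "y \<in> lambda_orbit Add Mul (lam b x)"
  then obtain a where "a \<in> carrier Mul" "y = lam a (lam b x)"
    unfolding lambda_orbit_def by blast
  then show "y \<in> lambda_orbit Add Mul x"
    using b x by (auto simp: lambda_orbit_def lambda_mult [symmetric])
next
  fix y assume "y \<in> lambda_orbit Add Mul x"
  then obtain a where a: "a \<in> carrier Mul" and y: "y = lam a x"
    unfolding lambda_orbit_def by blast
  have "y = lam (a \<otimes>\<^bsub>Mul\<^esub> inv\<^bsub>Mul\<^esub> b) (lam b x)"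
    using a b x y by (simp add: lambda_mult [symmetric] mul.m_assoc)
  then show "y \<in> lambda_orbit Add Mul (lam b x)"
    using a b unfolding lambda_orbit_def by blast
qed

abbreviation lambda_stabilizer :: "'a \<Rightarrow> 'a set" where
  "lambda_stabilizer g \<equiv> {h \<in> carrier Mul. lam h g = g}"

lemma normal_stabilizer_fixes_orbit:
  assumes normal: "lambda_stabilizer g \<lhd> Mul" and g: "g \<in> carrier Mul"
    and h: "h \<in> lambda_stabilizer g" and y: "y \<in> lambda_orbit Add Mul g"
  shows "lam h y = y"
proof -
  obtain d where d: "d \<in> carrier Mul" and y: "y = lam d g"
    using y unfolding lambda_orbit_def by blast
  define k where "k = inv\<^bsub>Mul\<^esub> d \<otimes>\<^bsub>Mul\<^esub> h \<otimes>\<^bsub>Mul\<^esub> d"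
  have k: "k \<in> lambda_stabilizer g"
    unfolding k_def using d h by (rule normal.inv_op_closed1 [OF normal])
  have hd: "h \<otimes>\<^bsub>Mul\<^esub> d = d \<otimes>\<^bsub>Mul\<^esub> k"
    using d h by (simp add: k_def mul.m_assoc [symmetric])
  have "lam h y = lam (h \<otimes>\<^bsub>Mul\<^esub> d) g"
    using d g h by (simp add: y lambda_mult)
  also have "\<dots> = lam d (lam k g)"
    using d g k by (simp only: hd lambda_mult mem_Collect_eq)
  also have "\<dots> = y"
    using k y by simp
  finally show ?thesis .
qed

lemma fixes_generating_set_imp_in_soc:
  assumes a: "a \<in> carrier Mul" and gen: "generate Add S = carrier Add"
    and fixed: "\<And>y. y \<in> S \<Longrightarrow> lam a y = y"
  shows "a \<in> brace_soc Add Mul"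
proof -
  have "S \<subseteq> {y \<in> carrier Add. lam a y = y}"
    using fixed generate.incl [of _ S Add] gen by auto
  then have "generate Add S \<subseteq> {y \<in> carrier Add. lam a y = y}"
    by (rule add.generate_subgroup_incl [OF _ fixed_points_subgroup [OF lambda_hom [OF a]]])
  then show ?thesis
    using a gen by (auto simp: brace_soc_def)
qed

end

theorem mainTheorem4:
  fixes Add Mul :: "'a monoid" and B :: "'a set" and g :: 'a
  assumes "left_brace Add Mul"
    and "finite (carrier Mul)"
    and "transitive_cycle_base Add Mul B"
    and "g \<in> B"
    and "{h \<in> carrier Mul. brace_lambda Add Mul h g = g} \<lhd> Mul"
  shows "{h \<in> carrier Mul. brace_lambda Add Mul h g = g} = brace_soc Add Mul"
proof -
  interpret brace Add Mul by (fact assms(1) [THEN brace.intro])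
  obtain x where x: "x \<in> carrier Mul" and B: "B = lambda_orbit Add Mul x"
    and gen: "generate Add B = carrier Add"
    using assms(3) unfolding transitive_cycle_base_def by blast
  obtain b where b: "b \<in> carrier Mul" and gb: "g = lam b x"
    using assms(4) B unfolding lambda_orbit_def by blast
  have g: "g \<in> carrier Mul" and orbit: "lambda_orbit Add Mul g = B"
    using b x by (simp_all add: gb B lambda_orbit_of_orbit_point)
  have "h \<in> brace_soc Add Mul" if h: "h \<in> lambda_stabilizer g" for h
  proof (rule fixes_generating_set_imp_in_soc [OF _ gen])
    show "h \<in> carrier Mul"
      using h by simp
    show "lam h y = y" if "y \<in> B" for y
      using normal_stabilizer_fixes_orbit [OF assms(5) g h] that orbit by simp
  qed
  moreover have "brace_soc Add Mul \<subseteq> lambda_stabilizer g"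
    using g by (auto simp: brace_soc_def)
  ultimately show ?thesis by blast
qed

end
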